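(* Let $\gamma\in(0,1)$, $c\in\mathbb{R}$, $\sigma^2>0$, and $\alpha_0\in(0,1]$. Define recursively, for $n\ge2$, $$\alpha_{n-1}=\frac{(1-\gamma)\lambda^{n-1}\sigma^2+\big(1-(1-\gamma)\delta^{n-1}\big)^2c^2}{(1-\gamma)^2\lambda^{n-1}\sigma^2+\big(1-(1-\gamma)\delta^{n-1}\big)^2c^2+\sigma^2},$$ where $\delta^1=\alpha_0$, $\lambda^1=\alpha_0^2$, and for $m>1$, $\delta^m=\alpha_{m-1}+(1-(1-\gamma)\alpha_{m-1})\delta^{m-1}$, $\lambda^m=\alpha_{m-1}^2+(1-(1-\gamma)\alpha_{m-1})^2\lambda^{m-1}$. Then $\lim_{n\to\infty}\delta^n=\frac{1}{1-\gamma}$.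
   Context: The formula for $\alpha_{n-1}$ is the prediction-error-minimizing stepsize for approximate value iteration in a single-state, single-action problem with i.i.d. rewards of mean $c$, variance $\sigma^2$, and discount factor $\gamma$; $\delta^n c$ is the mean of the $n$-th value estimate. *)

theory Defs
  imports "HOL-Analysis.Analysis"
begin

definition avi_alpha :: "real \<Rightarrow> real \<Rightarrow> real \<Rightarrow> real \<Rightarrow> real \<Rightarrow> real" where
  "avi_alpha \<gamma> c \<sigma>2 d l =
     ((1 - \<gamma>) * l * \<sigma>2 + (1 - (1 - \<gamma>) * d)^2 * c^2) /
     ((1 - \<gamma>)^2 * l * \<sigma>2 + (1 - (1 - \<gamma>) * d)^2 * c^2 + \<sigma>2)"

text \<open>avi_state m = (delta^(m+1), lambda^(m+1)).\<close>
fun avi_state :: "real \<Rightarrow> real \<Rightarrow> real \<Rightarrow> real \<Rightarrow> nat \<Rightarrow> real \<times> real" where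
  "avi_state \<gamma> c \<sigma>2 a0 0 = (a0, a0^2)"
| "avi_state \<gamma> c \<sigma>2 a0 (Suc m) =
     (let (d, l) = avi_state \<gamma> c \<sigma>2 a0 m;
          a = avi_alpha \<gamma> c \<sigma>2 d l
      in (a + (1 - (1 - \<gamma>) * a) * d, a^2 + (1 - (1 - \<gamma>) * a)^2 * l))"

text \<open>delta^n for n \<ge> 1 (value at n = 0 is irrelevant).\<close>
definition avi_delta :: "real \<Rightarrow> real \<Rightarrow> real \<Rightarrow> real \<Rightarrow> nat \<Rightarrow> real" where
  "avi_delta \<gamma> c \<sigma>2 a0 n = fst (avi_state \<gamma> c \<sigma>2 a0 (n - 1))"

end

theory Submission
  imports Defs
begin

text \<open>
  Write \<open>g = 1 - \<gamma>\<close> and \<open>e\<^sub>m = 1 - g \<delta>\<^sup>m\<close> for the normalised bias. The recursion for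
  \<open>\<delta>\<close> reads \<open>e\<^sub>m\<^sub>+\<^sub>1 = (1 - g \<alpha>\<^sub>m) e\<^sub>m\<close> with \<open>0 \<le> g \<alpha>\<^sub>m \<le> 1\<close>, so \<open>e\<close> decreases to some
  limit \<open>E \<ge> 0\<close>. The variance term satisfies \<open>\<lambda>\<^sup>m \<ge> (\<alpha>\<^sub>0 e\<^sub>m / e\<^sub>0)\<^sup>2\<close>, because it is
  multiplied by at least the square of the same factor at every step. If \<open>E > 0\<close>, then \<open>\<lambda>\<close> is
  bounded away from 0, hence so is the stepsize \<open>\<alpha>\<close>, and \<open>e\<close> decays geometrically to 0,
  a contradiction.
\<close>

lemma min_one_le_mediant:
  fixes N B D :: real
  assumes "0 \<le> N" "0 \<le> B" "0 < D"
  shows "min 1 (N / D) \<le> (N + B) / (D + B)"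
proof (cases "N \<le> D")
  case True
  have "N * (D + B) \<le> (N + B) * D"
    using assms True by (simp add: algebra_simps mult_left_mono)
  then have "N / D \<le> (N + B) / (D + B)"
    using assms by (simp add: divide_simps)
  then show ?thesis by simp
next
  case False
  then show ?thesis using assms by (simp add: divide_simps)
qed

lemma divide_mult_add_one_mono:
  fixes a x y :: real
  assumes "0 \<le> a" "0 \<le> x" "x \<le> y"
  shows "x / (a * x + 1) \<le> y / (a * y + 1)"
proof -
  have "x * (a * y + 1) \<le> y * (a * x + 1)"
    using assms by (simp add: algebra_simps)
  then show ?thesis
    using assms by (simp add: divide_simps add_nonneg_pos)
qed

lemma contracting_nonneg_tendsto_zero:
  fixes e :: "nat \<Rightarrow> real"
  assumes "\<And>m. 0 \<le> e m" "\<And>m. e (Suc m) \<le> q * e m" "0 \<le> q" "q < 1"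
  shows "e \<longlonglongrightarrow> 0"
proof -
  have bound: "e m \<le> q ^ m * e 0" for m
  proof (induction m)
    case (Suc m)
    have "e (Suc m) \<le> q * e m" by (rule assms(2))
    also have "\<dots> \<le> q * (q ^ m * e 0)" using Suc assms(3) by (rule mult_left_mono)
    finally show ?case by simp
  qed simp
  have "(\<lambda>m. q ^ m * e 0) \<longlonglongrightarrow> 0 * e 0"
    using assms(3,4) by (intro tendsto_mult LIMSEQ_power_zero tendsto_const) auto
  then show ?thesis
    using bound assms(1) by (intro tendsto_sandwich[of "\<lambda>_. 0" e _ "\<lambda>m. q ^ m * e 0"]) auto
qed

lemma avi_alpha_nonneg:
  assumes "\<gamma> \<le> 1" "0 < \<sigma>2" "0 \<le> l"
  shows "0 \<le> avi_alpha \<gamma> c \<sigma>2 d l"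
  using assms unfolding avi_alpha_def
  by (intro divide_nonneg_pos add_nonneg_nonneg add_nonneg_pos) auto

lemma avi_alpha_scaled_le_one:
  assumes "0 \<le> \<gamma>" "\<gamma> \<le> 1" "0 < \<sigma>2" "0 \<le> l"
  shows "(1 - \<gamma>) * avi_alpha \<gamma> c \<sigma>2 d l \<le> 1"
proof -
  define b where "b = (1 - (1 - \<gamma>) * d)^2 * c^2"
  have "0 \<le> b" by (simp add: b_def)
  have den: "0 < (1 - \<gamma>)^2 * l * \<sigma>2 + b + \<sigma>2"
    using assms \<open>0 \<le> b\<close> by (intro add_nonneg_pos add_nonneg_nonneg) auto
  have "(1 - \<gamma>) * b \<le> b"
    using assms \<open>0 \<le> b\<close> by (simp add: mult_left_le_one_le)
  then have "(1 - \<gamma>) * ((1 - \<gamma>) * l * \<sigma>2 + b) \<le> (1 - \<gamma>)^2 * l * \<sigma>2 + b + \<sigma>2"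
    using assms by (simp add: algebra_simps power2_eq_square)
  then show ?thesis
    using den by (simp add: avi_alpha_def b_def divide_simps)
qed

text \<open>The bias term of the stepsize only helps: it is a mediant that pushes \<open>\<alpha>\<close> towards 1.\<close>

lemma avi_alpha_lower_bound:
  assumes "\<gamma> \<le> 1" "0 < \<sigma>2" "0 \<le> lb" "lb \<le> l"
  shows "min 1 ((1 - \<gamma>) * lb / ((1 - \<gamma>)^2 * lb + 1)) \<le> avi_alpha \<gamma> c \<sigma>2 d l"
proof -
  define g where "g = 1 - \<gamma>"
  have "0 \<le> g" "0 \<le> l" using assms by (simp_all add: g_def)
  have "g * lb / (g^2 * lb + 1) = (g * lb) / (g * (g * lb) + 1)"
    by (simp add: power2_eq_square mult.assoc)
  also have "\<dots> \<le> (g * l) / (g * (g * l) + 1)"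
    using assms \<open>0 \<le> g\<close> by (intro divide_mult_add_one_mono mult_left_mono mult_nonneg_nonneg) auto
  also have "\<dots> = (g * l * \<sigma>2) / ((g * (g * l) + 1) * \<sigma>2)"
    using assms by simp
  also have "\<dots> = (g * l * \<sigma>2) / (g^2 * l * \<sigma>2 + \<sigma>2)"
    by (simp add: power2_eq_square algebra_simps)
  finally have "min 1 (g * lb / (g^2 * lb + 1)) \<le> min 1 ((g * l * \<sigma>2) / (g^2 * l * \<sigma>2 + \<sigma>2))"
    by simp
  also have "\<dots> \<le> avi_alpha \<gamma> c \<sigma>2 d l"
  proof -
    define b where "b = (1 - g * d)^2 * c^2"
    have "avi_alpha \<gamma> c \<sigma>2 d l = (g * l * \<sigma>2 + b) / ((g^2 * l * \<sigma>2 + \<sigma>2) + b)"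
      by (simp add: avi_alpha_def g_def b_def add_ac)
    moreover have "0 < g^2 * l * \<sigma>2 + \<sigma>2"
      using assms \<open>0 \<le> l\<close> by (intro add_nonneg_pos) auto
    ultimately show ?thesis
      using assms \<open>0 \<le> g\<close> \<open>0 \<le> l\<close> by (simp add: min_one_le_mediant b_def)
  qed
  finally show ?thesis by (simp add: g_def)
qed

locale avi_iteration =
  fixes \<gamma> c \<sigma>2 \<alpha>0 :: real
  assumes discount_pos: "0 < \<gamma>" and discount_less_one: "\<gamma> < 1"
    and variance_pos: "0 < \<sigma>2"
    and initial_pos: "0 < \<alpha>0" and initial_le_one: "\<alpha>0 \<le> 1"
begin

text \<open>Indices are shifted by one against the paper: \<open>delta m = \<delta>\<^sup>m\<^sup>+\<^sup>1\<close>, \<open>lambda m = \<lambda>\<^sup>m\<^sup>+\<^sup>1\<close> and \<open>alpha m = \<alpha>\<^sub>m\<close>.\<close>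

definition delta :: "nat \<Rightarrow> real" where
  "delta m = fst (avi_state \<gamma> c \<sigma>2 \<alpha>0 m)"

definition lambda :: "nat \<Rightarrow> real" where
  "lambda m = snd (avi_state \<gamma> c \<sigma>2 \<alpha>0 m)"

definition alpha :: "nat \<Rightarrow> real" where
  "alpha m = avi_alpha \<gamma> c \<sigma>2 (delta m) (lambda m)"

definition bias :: "nat \<Rightarrow> real" where
  "bias m = 1 - (1 - \<gamma>) * delta m"

lemma delta_0: "delta 0 = \<alpha>0"
  and lambda_0: "lambda 0 = \<alpha>0^2"
  by (simp_all add: delta_def lambda_def)

lemma delta_Suc: "delta (Suc m) = alpha m + (1 - (1 - \<gamma>) * alpha m) * delta m"
  and lambda_Suc: "lambda (Suc m) = (alpha m)^2 + (1 - (1 - \<gamma>) * alpha m)^2 * lambda m"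
  by (simp_all add: delta_def lambda_def alpha_def Let_def split: prod.split)

lemma lambda_nonneg: "0 \<le> lambda m"
  by (induction m) (simp_all add: lambda_0 lambda_Suc)

lemma alpha_nonneg: "0 \<le> alpha m"
  using discount_less_one variance_pos lambda_nonneg
  unfolding alpha_def by (intro avi_alpha_nonneg) auto

lemma alpha_scaled_le_one: "(1 - \<gamma>) * alpha m \<le> 1"
  using discount_pos discount_less_one variance_pos lambda_nonneg
  unfolding alpha_def by (intro avi_alpha_scaled_le_one) auto

lemma bias_Suc: "bias (Suc m) = (1 - (1 - \<gamma>) * alpha m) * bias m"
  by (simp add: bias_def delta_Suc algebra_simps)

lemma bias_0_pos: "0 < bias 0"
proof -
  have "(1 - \<gamma>) * \<alpha>0 \<le> 1 - \<gamma>"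
    using discount_less_one initial_le_one by (simp add: mult_left_le)
  then show ?thesis
    using discount_pos by (simp add: bias_def delta_0)
qed

lemma contraction_factor_nonneg: "0 \<le> 1 - (1 - \<gamma>) * alpha m"
  using alpha_scaled_le_one by simp

lemma bias_nonneg: "0 \<le> bias m"
  by (induction m) (use bias_0_pos contraction_factor_nonneg in \<open>simp_all add: bias_Suc\<close>)

lemma bias_decseq: "decseq bias"
proof (rule decseq_SucI)
  fix m
  have "0 \<le> (1 - \<gamma>) * alpha m"
    using discount_less_one alpha_nonneg by simp
  then show "bias (Suc m) \<le> bias m"
    using mult_left_le_one_le[OF bias_nonneg contraction_factor_nonneg] by (simp add: bias_Suc)
qed

text \<open>\<open>\<lambda>\<close> and \<open>bias\<^sup>2\<close> are multiplied by the same factor \<open>(1 - g \<alpha>)\<^sup>2\<close>, and \<open>\<lambda>\<close> gains \<open>\<alpha>\<^sup>2\<close> on top.\<close>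

lemma lambda_ge_bias: "\<alpha>0^2 * (bias m)^2 \<le> lambda m * (bias 0)^2"
proof (induction m)
  case 0
  show ?case by (simp add: lambda_0 mult.commute)
next
  case (Suc m)
  have "\<alpha>0^2 * (bias (Suc m))^2 = (1 - (1 - \<gamma>) * alpha m)^2 * (\<alpha>0^2 * (bias m)^2)"
    by (simp add: bias_Suc power_mult_distrib)
  also have "\<dots> \<le> (1 - (1 - \<gamma>) * alpha m)^2 * (lambda m * (bias 0)^2)"
    using Suc by (simp add: mult_left_mono)
  also have "\<dots> \<le> lambda (Suc m) * (bias 0)^2"
    by (simp add: lambda_Suc algebra_simps)
  finally show ?case .
qed

lemma bias_tendsto_zero: "bias \<longlonglongrightarrow> 0"
proof -
  obtain E where lim: "bias \<longlonglongrightarrow> E" and E_le: "\<And>m. E \<le> bias m"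
    using decseq_convergent[OF bias_decseq, of 0] bias_nonneg by blast
  have "E = 0"
  proof (rule ccontr)
    assume "E \<noteq> 0"
    moreover have "0 \<le> E" using LIMSEQ_le_const[OF lim] bias_nonneg by auto
    ultimately have "0 < E" by simp
    define lb where "lb = \<alpha>0^2 * E^2 / (bias 0)^2"
    define \<kappa> where "\<kappa> = min 1 ((1 - \<gamma>) * lb / ((1 - \<gamma>)^2 * lb + 1))"
    have "0 < lb" using \<open>0 < E\<close> initial_pos bias_0_pos by (simp add: lb_def)
    have "lb \<le> lambda m" for m
    proof -
      have "\<alpha>0^2 * E^2 \<le> \<alpha>0^2 * (bias m)^2"
        using E_le \<open>0 < E\<close> by (intro mult_left_mono power_mono) auto
      also have "\<dots> \<le> lambda m * (bias 0)^2" by (rule lambda_ge_bias)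
      finally show ?thesis using bias_0_pos by (simp add: lb_def divide_simps)
    qed
    then have \<kappa>_le: "\<kappa> \<le> alpha m" for m
      unfolding \<kappa>_def alpha_def
      using discount_less_one variance_pos \<open>0 < lb\<close> by (intro avi_alpha_lower_bound) auto
    have "0 < (1 - \<gamma>) * \<kappa>"
      using discount_less_one \<open>0 < lb\<close> by (simp add: \<kappa>_def add_pos_nonneg)
    have "(1 - \<gamma>) * \<kappa> \<le> 1"
      using \<kappa>_le[of 0] alpha_scaled_le_one[of 0] discount_less_one
      by (meson diff_ge_0_iff_ge less_imp_le mult_left_mono order_trans)
    have "bias (Suc m) \<le> (1 - (1 - \<gamma>) * \<kappa>) * bias m" for m
      using \<kappa>_le[of m] discount_less_one bias_nonneg[of m]
      by (simp add: bias_Suc mult_right_mono)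
    then have "bias \<longlonglongrightarrow> 0"
      using \<open>0 < (1 - \<gamma>) * \<kappa>\<close> \<open>(1 - \<gamma>) * \<kappa> \<le> 1\<close>
      by (intro contracting_nonneg_tendsto_zero bias_nonneg) auto
    with lim have "E = 0" by (rule LIMSEQ_unique)
    with \<open>E \<noteq> 0\<close> show False ..
  qed
  with lim show ?thesis by simp
qed

lemma delta_tendsto: "delta \<longlonglongrightarrow> 1 / (1 - \<gamma>)"
proof -
  have "delta = (\<lambda>m. (1 - bias m) / (1 - \<gamma>))"
    using discount_less_one by (auto simp: bias_def)
  moreover have "(\<lambda>m. (1 - bias m) / (1 - \<gamma>)) \<longlonglongrightarrow> (1 - 0) / (1 - \<gamma>)"
    using discount_less_one by (intro tendsto_intros bias_tendsto_zero) auto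
  ultimately show ?thesis by simp
qed

end

theorem proposition5:
  fixes \<gamma> c \<sigma>2 \<alpha>0 :: real
  assumes "0 < \<gamma>" "\<gamma> < 1" "0 < \<sigma>2" "0 < \<alpha>0" "\<alpha>0 \<le> 1"
  shows "(\<lambda>n. avi_delta \<gamma> c \<sigma>2 \<alpha>0 n) \<longlonglongrightarrow> 1 / (1 - \<gamma>)"
proof -
  interpret avi_iteration \<gamma> c \<sigma>2 \<alpha>0
    using assms by unfold_locales
  have "(\<lambda>n. avi_delta \<gamma> c \<sigma>2 \<alpha>0 (Suc n)) = delta"
    by (simp add: fun_eq_iff avi_delta_def delta_def)
  then show ?thesis
    using delta_tendsto by (auto intro: LIMSEQ_imp_Suc)
qed

end
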